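(* Let $m,\delta,\gamma>0$ and let $\Gamma(x,y,z,u):=\frac{\Psi(x,z,u,\delta,\gamma)}{\langle Kx,y\rangle-f^*(y)}$ be defined on $\{(x,y)\in\mathbb{R}^n\times\operatorname{dom}f^*:\langle Kx,y\rangle-f^*(y)>m/2\}\times\operatorname{dom}g^*\times\mathbb{R}^n$. Suppose that $f^*$ is calm at $\hat y\in\operatorname{dom}f^*$, that $\hat x\in\mathcal{S}$ satisfies $\langle K\hat x,\hat y\rangle-f^*(\hat y)>m/2$, that $g^*$ is differentiable at $\hat z\in\operatorname{int}(\operatorname{dom}g^* )$, and let $\hat u\in\mathbb{R}^n$. Put $\alpha_1:=\Psi(\hat x,\hat z,\hat u,\delta,\gamma)$, $\alpha_2:=\langle K\hat x,\hat y\rangle-f^*(\hat y)$, and suppose $\alpha_1>0$. Then there exist open sets $\mathcal{O}_1\subseteq\mathbb{R}^n$, $\mathcal{O}_2\subseteq\operatorname{dom}f^*$, $\mathcal{O}_3\subseteq\operatorname{dom}g^*$ with $\hat x\in\mathcal{O}_1$, $\hat y\in\mathcal{O}_2$, $\hat z\in\mathcal{O}_3$, such that $\langle Kx,y\rangle-f^*(y)>m/2$ for all $(x,y)\in\mathcal{O}_1\times\mathcal{O}_2$, and the Fréchet subdifferential $\hat\partial\Gamma(\hat x,\hat y,\hat z,\hat u)$ equals the set of all $(\xi_x,\xi_y,\xi_z,\xi_u)$ with $\xi_x\in\frac{\alpha_2\left(A^*\hat z+\nabla h(\hat x)+\partial\iota_{\mathcal{S}}(\hat x)+\delta(\hat x-\hat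 u)\right)-\alpha_1K^*\hat y}{(\langle K\hat x,\hat y\rangle-f^*(\hat y))^2}$, $\xi_y\in\frac{\alpha_1(\partial f^*(\hat y)-K\hat x)}{(\langle K\hat x,\hat y\rangle-f^*(\hat y))^2}$, $\xi_z=\frac{A\hat x-\nabla g^*(\hat z)-\gamma\hat z}{\langle K\hat x,\hat y\rangle-f^*(\hat y)}$, $\xi_u=\frac{\delta(\hat u-\hat x)}{\langle K\hat x,\hat y\rangle-f^*(\hat y)}$.
   Context: $\mathcal{S}\subseteq\mathbb{R}^n$ nonempty, convex, compact; $A:\mathbb{R}^n\to\mathbb{R}^s$, $K:\mathbb{R}^n\to\mathbb{R}^p$ linear with adjoints $A^*,K^*$; $g:\mathbb{R}^s\to\mathbb{R}\cup\{+\infty\}$ proper, convex, lsc; $h:\mathbb{R}^n\to\mathbb{R}$ differentiable on an open set containing $\mathcal{S}$ with Lipschitz gradient there; $f:\mathbb{R}^p\to\mathbb{R}\cup\{+\infty\}$ proper, convex, lsc with $K(\mathcal{S})\subseteq\operatorname{int}(\operatorname{dom}f)$ and $f(Kx)>0$ on $\mathcal{S}$; $\mathcal{S}\cap A^{-1}(\operatorname{dom}g)\ne\emptyset$ and $\inf_{x\in\mathcal{S}}\{g(Ax)+h(x)\}>0$. $f^*,g^*$ are Fenchel conjugates, $\iota_{\mathcal{S}}$ the indicator of $\mathcal{S}$, $\partial$ the convex subdifferential, $\Psi(x,z,u,\delta,\gamma):=\langle z,Ax\rangle-g^*(z)+h(x)+\iota_{\mathcal{S}}(x)+\frac{\delta}{2}\|x-u\|^2-\frac{\gamma}{2}\|z\|^2$.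 A function $\varphi$ is calm at $\hat y\in\operatorname{dom}\varphi$ if there are $\epsilon,\kappa>0$ with $|\varphi(y)-\varphi(\hat y)|\le\kappa\|y-\hat y\|$ for all $y$ with $\|y-\hat y\|<\epsilon$. The Fréchet subdifferential is $\hat\partial\varphi(\bar w)=\{v:\liminf_{w\to\bar w,w\ne\bar w}\frac{\varphi(w)-\varphi(\bar w)-\langle v,w-\bar w\rangle}{\|w-\bar w\|}\ge0\}$. *)

theory Defs
  imports "HOL-Analysis.Analysis"
begin

definition edom :: "('a \<Rightarrow> ereal) \<Rightarrow> 'a set" where
  "edom \<phi> = {x. \<phi> x < \<infinity>}"

definition proper_fun :: "('a \<Rightarrow> ereal) \<Rightarrow> bool" where
  "proper_fun \<phi> \<longleftrightarrow> (\<forall>x. \<phi> x \<noteq> -\<infinity>) \<and> (\<exists>x. \<phi> x \<noteq> \<infinity>)"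

definition convex_fun :: "('a::real_vector \<Rightarrow> ereal) \<Rightarrow> bool" where
  "convex_fun \<phi> \<longleftrightarrow> convex {(x, r::real). \<phi> x \<le> ereal r}"

definition lsc_fun :: "('a::topological_space \<Rightarrow> ereal) \<Rightarrow> bool" where
  "lsc_fun \<phi> \<longleftrightarrow> (\<forall>x. \<phi> x \<le> Liminf (at x) \<phi>)"

definition fconj :: "('a::real_inner \<Rightarrow> ereal) \<Rightarrow> 'a \<Rightarrow> ereal" where
  "fconj \<phi> y = (SUP x. ereal (inner x y) - \<phi> x)"

definition ind :: "'a set \<Rightarrow> 'a \<Rightarrow> ereal" where
  "ind S x = (if x \<in> S then 0 else \<infinity>)"

definition csubdiff :: "('a::real_inner \<Rightarrow> ereal) \<Rightarrow> 'a \<Rightarrow> 'a set" where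
  "csubdiff \<phi> x = {v. \<bar>\<phi> x\<bar> \<noteq> \<infinity> \<and> (\<forall>y. \<phi> y \<ge> \<phi> x + ereal (inner v (y - x)))}"

definition calm_at :: "('a::real_normed_vector \<Rightarrow> ereal) \<Rightarrow> 'a \<Rightarrow> bool" where
  "calm_at \<phi> y0 \<longleftrightarrow> (\<exists>\<epsilon>>0. \<exists>\<kappa>>0. \<forall>y. norm (y - y0) < \<epsilon> \<longrightarrow>
       \<bar>\<phi> y - \<phi> y0\<bar> \<le> ereal (\<kappa> * norm (y - y0)))"

definition frechet_subdiff :: "('a::real_inner \<Rightarrow> ereal) \<Rightarrow> 'a \<Rightarrow> 'a set" where
  "frechet_subdiff \<phi> w0 = {v. \<bar>\<phi> w0\<bar> \<noteq> \<infinity> \<and>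
     Liminf (at w0) (\<lambda>w. (\<phi> w - \<phi> w0 - ereal (inner v (w - w0))) / ereal (norm (w - w0))) \<ge> 0}"

definition Psi :: "('a::real_inner \<Rightarrow> 'b::real_inner) \<Rightarrow> ('b \<Rightarrow> ereal) \<Rightarrow> ('a \<Rightarrow> real) \<Rightarrow> 'a set
     \<Rightarrow> 'a \<Rightarrow> 'b \<Rightarrow> 'a \<Rightarrow> real \<Rightarrow> real \<Rightarrow> ereal" where
  "Psi A g h S x z u \<delta> \<gamma> = ereal (inner z (A x)) - fconj g z + ereal (h x) + ind S x
      + ereal (\<delta> / 2 * (norm (x - u))\<^sup>2) - ereal (\<gamma> / 2 * (norm z)\<^sup>2)"

definition Gam :: "('a::real_inner \<Rightarrow> 'b::real_inner) \<Rightarrow> ('a \<Rightarrow> 'c::real_inner) \<Rightarrow> ('c \<Rightarrow> ereal)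
     \<Rightarrow> ('b \<Rightarrow> ereal) \<Rightarrow> ('a \<Rightarrow> real) \<Rightarrow> 'a set \<Rightarrow> real \<Rightarrow> real \<Rightarrow> real
     \<Rightarrow> 'a \<times> 'c \<times> 'b \<times> 'a \<Rightarrow> ereal" where
  "Gam A K f g h S m \<delta> \<gamma> w = (case w of (x, y, z, u) \<Rightarrow>
     (if y \<in> edom (fconj f) \<and> ereal (inner (K x) y) - fconj f y > ereal (m / 2) \<and> z \<in> edom (fconj g)
      then Psi A g h S x z u \<delta> \<gamma> / (ereal (inner (K x) y) - fconj f y)
      else \<infinity>))"

end

theory Submission
  imports Defs
begin

(* Near w0 = (xh, yh, zh, uh), Gam coincides with R = P / (<K x, y> - f*(y)) on S x UNIV and is
   +infinity elsewhere; the numerator P, the smooth part of Psi, is differentiable at w0.  The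
   conjugate f* is only calm at yh, but it enters the quotient linearly to first order:
     R w - R w0 = <grad_R, w - w0> + alpha1 / alpha2^2 * (f*(y) - f*(yh)) + o(|w - w0|).
   Frechet subgradients do not see o(|w - w0|) terms, so the Frechet subdifferential of Gam at w0
   is grad_R plus that of the convex separable function iota_S(x) + alpha1 / alpha2^2 * f*(y),
   which is N_S(xh) x (alpha1 / alpha2^2) df*(yh) x {0} x {0}. *)

section \<open>Frechet subgradients relative to a set\<close>

definition frechet_subgradient_on :: "'w::real_inner set \<Rightarrow> ('w \<Rightarrow> real) \<Rightarrow> 'w \<Rightarrow> 'w \<Rightarrow> bool" where
  "frechet_subgradient_on D R w0 v \<longleftrightarrow>
     (\<forall>e>0. \<forall>\<^sub>F w in at w0 within D. R w - R w0 - inner v (w - w0) > - e * norm (w - w0))"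

lemma frechet_subdiff_eq_subgradient_on:
  fixes G :: "'w::real_inner \<Rightarrow> ereal"
  assumes G: "\<forall>\<^sub>F w in nhds w0. G w = (if w \<in> D then ereal (R w) else \<infinity>)" and "w0 \<in> D"
  shows "frechet_subdiff G w0 = {v. frechet_subgradient_on D R w0 v}"
proof (rule set_eqI)
  fix v
  have G0: "G w0 = ereal (R w0)"
    using eventually_nhds_x_imp_x[OF G] \<open>w0 \<in> D\<close> by simp
  define q where "q w = (G w - G w0 - ereal (inner v (w - w0))) / ereal (norm (w - w0))" for w
  have q: "\<forall>\<^sub>F w in nhds w0. (w \<noteq> w0 \<longrightarrow> ereal (- e) < q w) \<longleftrightarrow>
      (w \<noteq> w0 \<longrightarrow> w \<in> D \<longrightarrow> R w - R w0 - inner v (w - w0) > - e * norm (w - w0))" for e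
    using G
  proof eventually_elim
    case (elim w)
    show ?case
    proof (cases "w = w0 \<or> w \<notin> D")
      case True then show ?thesis using elim G0 by (auto simp: q_def)
    next
      case False
      then have "norm (w - w0) > 0" by simp
      then show ?thesis using elim G0 False by (simp add: q_def field_simps)
    qed
  qed
  have "v \<in> frechet_subdiff G w0 \<longleftrightarrow> (\<forall>y<0. \<forall>\<^sub>F w in at w0. y < q w)"
    unfolding frechet_subdiff_def q_def using G0 by (simp add: le_Liminf_iff)
  also have "\<dots> \<longleftrightarrow> (\<forall>e>0. \<forall>\<^sub>F w in at w0. ereal (- e) < q w)"
  proof safe
    fix y :: ereal assume H: "\<forall>e>0. \<forall>\<^sub>F w in at w0. ereal (- e) < q w" and "y < 0"
    then obtain e where e: "e > 0" "y \<le> ereal (- e)"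
      by (cases y) (auto intro: that[of 1] that[of "- real_of_ereal y"])
    show "\<forall>\<^sub>F w in at w0. y < q w"
      using H[rule_format, OF e(1)] by eventually_elim (use e(2) in auto)
  qed (simp add: ereal_uminus_less_reorder)
  also have "\<dots> \<longleftrightarrow> frechet_subgradient_on D R w0 v"
    unfolding frechet_subgradient_on_def eventually_at_filter
    using eventually_subst[OF q] by simp
  finally show "v \<in> frechet_subdiff G w0 \<longleftrightarrow> v \<in> {v. frechet_subgradient_on D R w0 v}"
    by simp
qed

lemma frechet_subgradient_on_shift:
  assumes "\<forall>e>0. \<forall>\<^sub>F w in at w0.
             \<bar>R1 w - R1 w0 - (R2 w - R2 w0) - inner l (w - w0)\<bar> \<le> e * norm (w - w0)"
  shows "frechet_subgradient_on D R1 w0 (v + l) \<longleftrightarrow> frechet_subgradient_on D R2 w0 v"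
proof -
  have transfer: "frechet_subgradient_on D X w0 (u + k)"
    if Y: "frechet_subgradient_on D Y w0 u"
      and XY: "\<forall>e>0. \<forall>\<^sub>F w in at w0.
                 \<bar>X w - X w0 - (Y w - Y w0) - inner k (w - w0)\<bar> \<le> e * norm (w - w0)"
    for X Y u k
    unfolding frechet_subgradient_on_def
  proof (intro allI impI)
    fix e :: real assume "e > 0"
    then have "e / 2 > 0" by simp
    from Y[unfolded frechet_subgradient_on_def, rule_format, OF this]
      filter_leD[OF at_le[OF subset_UNIV], OF XY[rule_format, OF this]]
    show "\<forall>\<^sub>F w in at w0 within D. X w - X w0 - inner (u + k) (w - w0) > - e * norm (w - w0)"
    proof eventually_elim
      case (elim w)
      have "e * norm (w - w0) = e / 2 * norm (w - w0) + e / 2 * norm (w - w0)" by simp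
      with elim show ?case unfolding inner_add_left abs_le_iff by linarith
    qed
  qed
  show ?thesis
  proof
    assume "frechet_subgradient_on D R1 w0 (v + l)"
    with transfer[of R1 "v + l" R2 "- l"] assms show "frechet_subgradient_on D R2 w0 v"
      by (simp add: abs_minus_commute algebra_simps)
  qed (use transfer assms in blast)
qed

lemma frechet_subgradient_on_directional:
  assumes v: "frechet_subgradient_on D R w0 v"
    and ray: "\<forall>\<^sub>F t in at_right 0. w0 + t *\<^sub>R d \<in> D \<and> R (w0 + t *\<^sub>R d) - R w0 \<le> t * q"
  shows "inner v d \<le> q"
proof (cases "d = 0")
  case True
  obtain t :: real where "t > 0" "R (w0 + t *\<^sub>R d) - R w0 \<le> t * q"
    using eventually_happens'[OF trivial_limit_at_right_real eventually_conj[OF ray eventually_at_right_less]]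
    by blast
  then show ?thesis using True by (simp add: zero_le_mult_iff)
next
  case False
  show ?thesis
  proof (rule ccontr)
    assume "\<not> inner v d \<le> q"
    define e where "e = (inner v d - q) / norm d"
    have "e > 0" using False \<open>\<not> inner v d \<le> q\<close> by (simp add: e_def)
    have "\<forall>\<^sub>F t in at_right 0. w0 + t *\<^sub>R d \<in> D \<and> w0 + t *\<^sub>R d \<noteq> w0"
      using ray eventually_at_right_less[of 0] by eventually_elim (use False in auto)
    moreover have "((\<lambda>t. w0 + t *\<^sub>R d) \<longlongrightarrow> w0) (at_right 0)"
      by (auto intro!: tendsto_eq_intros)
    ultimately have "filterlim (\<lambda>t. w0 + t *\<^sub>R d) (at w0 within D) (at_right 0)"
      unfolding filterlim_at by blast
    from eventually_compose_filterlim[OF v[unfolded frechet_subgradient_on_def, rule_format, OF \<open>e > 0\<close>] this]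
    have "\<forall>\<^sub>F t in at_right 0. t > 0 \<and> R (w0 + t *\<^sub>R d) - R w0 \<le> t * q \<and>
        R (w0 + t *\<^sub>R d) - R w0 - t * inner v d > - e * (t * norm d)"
      using ray eventually_at_right_less[of 0] by eventually_elim auto
    then obtain t where t: "t > 0" "R (w0 + t *\<^sub>R d) - R w0 \<le> t * q"
      "R (w0 + t *\<^sub>R d) - R w0 - t * inner v d > - e * (t * norm d)"
      using eventually_happens'[OF trivial_limit_at_right_real] by blast
    have "e * (t * norm d) = t * (inner v d - q)" using False by (simp add: e_def)
    then show False using t by (simp add: algebra_simps)
  qed
qed

lemma frechet_subgradient_onI:
  assumes "\<forall>\<^sub>F w in at w0 within D. inner v (w - w0) \<le> R w - R w0"
  shows "frechet_subgradient_on D R w0 v"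
  unfolding frechet_subgradient_on_def
proof (intro allI impI)
  fix e :: real assume "e > 0"
  from assms eventually_neq_at_within[of w0 w0 D]
  show "\<forall>\<^sub>F w in at w0 within D. R w - R w0 - inner v (w - w0) > - e * norm (w - w0)"
  proof eventually_elim
    case (elim w)
    then have "e * norm (w - w0) > 0" using \<open>e > 0\<close> by simp
    with elim show ?case by linarith
  qed
qed

section \<open>Normal cones and subgradients of conjugates\<close>

lemma fconj_neq_minf:
  assumes "proper_fun \<phi>"
  shows "fconj \<phi> y \<noteq> -\<infinity>"
proof -
  obtain x0 r where "\<phi> x0 = ereal r"
    using assms unfolding proper_fun_def by (metis ereal_cases)
  moreover have "ereal (inner x0 y) - \<phi> x0 \<le> fconj \<phi> y"
    unfolding fconj_def by (rule SUP_upper) simp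
  ultimately show ?thesis by auto
qed

lemma fconj_segment_le:
  assumes "fconj \<phi> y1 = ereal a1" "fconj \<phi> y2 = ereal a2" "0 \<le> t" "t \<le> 1"
  shows "fconj \<phi> ((1 - t) *\<^sub>R y1 + t *\<^sub>R y2) \<le> ereal ((1 - t) * a1 + t * a2)"
  unfolding fconj_def
proof (rule SUP_least)
  fix x
  have "ereal (inner x y1) - \<phi> x \<le> ereal a1" "ereal (inner x y2) - \<phi> x \<le> ereal a2"
    using assms(1,2) unfolding fconj_def by (metis SUP_upper UNIV_I)+
  then show "ereal (inner x ((1 - t) *\<^sub>R y1 + t *\<^sub>R y2)) - \<phi> x \<le> ereal ((1 - t) * a1 + t * a2)"
  proof (cases "\<phi> x")
    case (real r)
    assume "ereal (inner x y1) - \<phi> x \<le> ereal a1" "ereal (inner x y2) - \<phi> x \<le> ereal a2"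
    with real have "(1 - t) * (inner x y1 - r) + t * (inner x y2 - r) \<le> (1 - t) * a1 + t * a2"
      using assms(3,4) by (intro add_mono mult_left_mono) auto
    with real show ?thesis by (simp add: algebra_simps)
  qed simp_all
qed

lemma csubdiff_ind_iff:
  assumes "x \<in> S"
  shows "v \<in> csubdiff (ind S) x \<longleftrightarrow> (\<forall>y\<in>S. inner v (y - x) \<le> 0)"
  using assms unfolding csubdiff_def ind_def
  by (auto simp: zero_ereal_def)

lemma csubdiff_ind_scaleR_iff:
  assumes "x \<in> S" "r > 0"
  shows "r *\<^sub>R v \<in> csubdiff (ind S) x \<longleftrightarrow> v \<in> csubdiff (ind S) x"
  using assms by (simp add: csubdiff_ind_iff mult_le_0_iff)

lemma csubdiff_ind_translate_iff:
  assumes "x \<in> S" "r > 0"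
  shows "(\<exists>w\<in>csubdiff (ind S) x. a = b + r *\<^sub>R w) \<longleftrightarrow> a - b \<in> csubdiff (ind S) x"
proof
  assume "\<exists>w\<in>csubdiff (ind S) x. a = b + r *\<^sub>R w"
  then obtain w where "w \<in> csubdiff (ind S) x" "a - b = r *\<^sub>R w" by force
  then show "a - b \<in> csubdiff (ind S) x" using csubdiff_ind_scaleR_iff[OF assms] by simp
next
  assume "a - b \<in> csubdiff (ind S) x"
  then have "(1 / r) *\<^sub>R (a - b) \<in> csubdiff (ind S) x"
    using csubdiff_ind_scaleR_iff[OF \<open>x \<in> S\<close>, of "1 / r"] \<open>r > 0\<close> by simp
  moreover have "a = b + r *\<^sub>R ((1 / r) *\<^sub>R (a - b))" using \<open>r > 0\<close> by simp
  ultimately show "\<exists>w\<in>csubdiff (ind S) x. a = b + r *\<^sub>R w" by blast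
qed

lemma fconj_eventually_segment_le:
  assumes F: "\<forall>\<^sub>F y in nhds yh. fconj f y = ereal (F y)" and "fconj f y = ereal Fy"
  shows "\<forall>\<^sub>F t in at_right 0. F (yh + t *\<^sub>R (y - yh)) - F yh \<le> t * (Fy - F yh)"
proof -
  have "((\<lambda>t. yh + t *\<^sub>R (y - yh)) \<longlongrightarrow> yh) (at_right 0)" by (auto intro!: tendsto_eq_intros)
  from eventually_compose_filterlim[OF F this] eventually_at_right_real[OF zero_less_one]
  show ?thesis
  proof eventually_elim
    case (elim t)
    have "fconj f yh = ereal (F yh)" using eventually_nhds_x_imp_x[OF F] .
    from fconj_segment_le[OF this \<open>fconj f y = ereal Fy\<close>, of t] elim
    have "fconj f ((1 - t) *\<^sub>R yh + t *\<^sub>R y) \<le> ereal ((1 - t) * F yh + t * Fy)" by simp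
    moreover have "(1 - t) *\<^sub>R yh + t *\<^sub>R y = yh + t *\<^sub>R (y - yh)" by (simp add: algebra_simps)
    ultimately show ?case using elim by (simp add: algebra_simps)
  qed
qed

lemma frechet_subgradient_on_ind_fconj_D_normal:
  fixes S :: "'a::real_inner set" and zh :: "'b::real_inner"
  assumes S: "convex S" "xh \<in> S"
    and H: "frechet_subgradient_on (S \<times> UNIV) (\<lambda>(x, y, z, u). c * F y) (xh, yh, zh, uh) (a, b, cz, cu)"
  shows "a \<in> csubdiff (ind S) xh" "cz = 0" "cu = 0"
proof -
  note ray = frechet_subgradient_on_directional[OF H]
  have "inner cz cz \<le> 0" using ray[of "(0, 0, cz, 0)" 0] by (simp add: S(2))
  then show "cz = 0" by (metis antisym inner_ge_zero inner_eq_zero_iff)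
  have "inner cu cu \<le> 0" using ray[of "(0, 0, 0, cu)" 0] by (simp add: S(2))
  then show "cu = 0" by (metis antisym inner_ge_zero inner_eq_zero_iff)
  have "inner a (y - xh) \<le> 0" if "y \<in> S" for y
  proof (rule ray[of "(y - xh, 0, 0, 0)" 0, simplified])
    show "\<forall>\<^sub>F t in at_right 0. xh + t *\<^sub>R (y - xh) \<in> S"
      using eventually_at_right_real[OF zero_less_one]
    proof eventually_elim
      case (elim t)
      have "(1 - t) *\<^sub>R xh + t *\<^sub>R y \<in> S" using elim S that by (intro convexD) auto
      then show ?case by (simp add: algebra_simps)
    qed
  qed
  then show "a \<in> csubdiff (ind S) xh" using csubdiff_ind_iff[OF S(2)] by blast
qed

lemma frechet_subgradient_on_ind_fconj_D_conj:
  fixes S :: "'a::real_inner set" and f :: "'c::real_inner \<Rightarrow> ereal" and zh :: "'b::real_inner"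
  assumes "xh \<in> S" "c > 0" "proper_fun f"
    and F: "\<forall>\<^sub>F y in nhds yh. fconj f y = ereal (F y)"
    and H: "frechet_subgradient_on (S \<times> UNIV) (\<lambda>(x, y, z, u). c * F y) (xh, yh, zh, uh) (a, b, cz, cu)"
  shows "(1 / c) *\<^sub>R b \<in> csubdiff (fconj f) yh"
  unfolding csubdiff_def
proof (intro CollectI conjI allI)
  have Fyh: "fconj f yh = ereal (F yh)" using eventually_nhds_x_imp_x[OF F] .
  then show "\<bar>fconj f yh\<bar> \<noteq> \<infinity>" by simp
  fix y
  show "fconj f yh + ereal (inner ((1 / c) *\<^sub>R b) (y - yh)) \<le> fconj f y"
  proof (cases "fconj f y")
    case (real Fy)
    from fconj_eventually_segment_le[OF F real]
    have "\<forall>\<^sub>F t in at_right 0. c * F (yh + t *\<^sub>R (y - yh)) - c * F yh \<le> t * (c * (Fy - F yh))"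
    proof eventually_elim
      case (elim t)
      then have "c * (F (yh + t *\<^sub>R (y - yh)) - F yh) \<le> c * (t * (Fy - F yh))"
        using \<open>c > 0\<close> by (intro mult_left_mono) auto
      then show ?case by (simp add: algebra_simps)
    qed
    then have "inner b (y - yh) \<le> c * (Fy - F yh)"
      using frechet_subgradient_on_directional[OF H, of "(0, y - yh, 0, 0)" "c * (Fy - F yh)"]
        \<open>xh \<in> S\<close>
      by simp
    then show ?thesis using real Fyh \<open>c > 0\<close> by (simp add: field_simps)
  qed (use fconj_neq_minf[OF \<open>proper_fun f\<close>] in auto)
qed

lemma frechet_subgradient_on_ind_fconj_I:
  fixes S :: "'a::real_inner set" and f :: "'c::real_inner \<Rightarrow> ereal" and zh :: "'b::real_inner"
  assumes "c > 0" and F: "\<forall>\<^sub>F y in nhds yh. fconj f y = ereal (F y)"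
    and a: "a \<in> csubdiff (ind S) xh" and v: "v \<in> csubdiff (fconj f) yh"
  shows "frechet_subgradient_on (S \<times> UNIV) (\<lambda>(x, y, z, u). c * F y) (xh, yh, zh, uh) (a, c *\<^sub>R v, 0, 0)"
proof (rule frechet_subgradient_onI)
  let ?w0 = "(xh, yh, zh, uh)"
  have "\<bar>ind S xh\<bar> \<noteq> \<infinity>" using a by (simp add: csubdiff_def)
  then have "xh \<in> S" by (simp add: ind_def split: if_split_asm)
  have "((\<lambda>w. fst (snd w)) \<longlongrightarrow> yh) (at ?w0 within S \<times> UNIV)"
    by (auto intro!: tendsto_eq_intros)
  from eventually_compose_filterlim[OF F this]
  have "\<forall>\<^sub>F w in at ?w0 within S \<times> UNIV.
      w \<in> S \<times> UNIV \<and> fconj f (fst (snd w)) = ereal (F (fst (snd w)))"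
    by (simp add: eventually_conj_iff eventually_at_filter)
  then show "\<forall>\<^sub>F w in at ?w0 within S \<times> UNIV.
      inner (a, c *\<^sub>R v, 0, 0) (w - ?w0)
        \<le> (case w of (x, y, z, u) \<Rightarrow> c * F y) - (case ?w0 of (x, y, z, u) \<Rightarrow> c * F y)"
  proof eventually_elim
    case (elim w)
    obtain x y z u where w: "w = (x, y, z, u)" by (cases w)
    have "fconj f yh + ereal (inner v (y - yh)) \<le> fconj f y"
      using v by (simp add: csubdiff_def)
    with elim w eventually_nhds_x_imp_x[OF F] have "inner v (y - yh) \<le> F y - F yh" by simp
    then have "c * inner v (y - yh) \<le> c * (F y - F yh)"
      using \<open>c > 0\<close> by (intro mult_left_mono) auto
    moreover have "inner a (x - xh) \<le> 0"
      using a \<open>xh \<in> S\<close> elim w by (simp add: csubdiff_ind_iff)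
    ultimately show ?case using w by (simp add: algebra_simps)
  qed
qed

lemma frechet_subgradient_on_ind_fconj_iff:
  fixes S :: "'a::real_inner set" and f :: "'c::real_inner \<Rightarrow> ereal" and zh :: "'b::real_inner"
  assumes "convex S" "xh \<in> S" "c > 0" "proper_fun f"
    and "\<forall>\<^sub>F y in nhds yh. fconj f y = ereal (F y)"
  shows "frechet_subgradient_on (S \<times> UNIV) (\<lambda>(x, y, z, u). c * F y) (xh, yh, zh, uh) (a, b, cz, cu)
    \<longleftrightarrow> a \<in> csubdiff (ind S) xh \<and> (\<exists>v\<in>csubdiff (fconj f) yh. b = c *\<^sub>R v) \<and> cz = 0 \<and> cu = 0"
proof
  assume H: "frechet_subgradient_on (S \<times> UNIV) (\<lambda>(x, y, z, u). c * F y) (xh, yh, zh, uh) (a, b, cz, cu)"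
  have "\<exists>v\<in>csubdiff (fconj f) yh. b = c *\<^sub>R v"
    by (rule bexI[OF _ frechet_subgradient_on_ind_fconj_D_conj[OF assms(2-5) H]])
      (use \<open>c > 0\<close> in simp)
  with frechet_subgradient_on_ind_fconj_D_normal[OF assms(1,2) H]
  show "a \<in> csubdiff (ind S) xh \<and> (\<exists>v\<in>csubdiff (fconj f) yh. b = c *\<^sub>R v) \<and> cz = 0 \<and> cu = 0"
    by blast
next
  assume "a \<in> csubdiff (ind S) xh \<and> (\<exists>v\<in>csubdiff (fconj f) yh. b = c *\<^sub>R v) \<and> cz = 0 \<and> cu = 0"
  then obtain v where a: "a \<in> csubdiff (ind S) xh" and v: "v \<in> csubdiff (fconj f) yh"
    and "b = c *\<^sub>R v" "cz = 0" "cu = 0"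
    by blast
  with frechet_subgradient_on_ind_fconj_I[OF assms(3,5) a v, of zh uh]
  show "frechet_subgradient_on (S \<times> UNIV) (\<lambda>(x, y, z, u). c * F y) (xh, yh, zh, uh) (a, b, cz, cu)"
    by simp
qed

section \<open>First-order expansion of a quotient with a calm denominator\<close>

lemma isCont_if_calm:
  fixes F :: "'w::real_normed_vector \<Rightarrow> real"
  assumes "\<forall>\<^sub>F y in at y0. \<bar>F y - F y0\<bar> \<le> \<kappa> * norm (y - y0)"
  shows "isCont F y0"
proof -
  have "((\<lambda>y. \<kappa> * norm (y - y0)) \<longlongrightarrow> \<kappa> * norm (y0 - y0)) (at y0)"
    by (intro tendsto_intros)
  then have "((\<lambda>y. F y - F y0) \<longlongrightarrow> 0) (at y0)"
    using Lim_null_comparison[of "\<lambda>y. F y - F y0"] assms by simp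
  then show ?thesis by (simp add: isCont_def LIM_zero_iff)
qed

lemma has_derivative_compose_calm_remainder:
  fixes \<Phi> :: "'p::real_normed_vector \<Rightarrow> real" and \<gamma> :: "'w::real_normed_vector \<Rightarrow> 'p"
  assumes \<Phi>: "(\<Phi> has_derivative \<Phi>') (at p0)"
    and \<gamma>: "\<forall>\<^sub>F w in at w0. norm (\<gamma> w - p0) \<le> L * norm (w - w0)"
    and "e > 0"
  shows "\<forall>\<^sub>F w in at w0. \<bar>\<Phi> (\<gamma> w) - \<Phi> p0 - \<Phi>' (\<gamma> w - p0)\<bar> \<le> e * norm (w - w0)"
proof -
  define L' where "L' = max L 0 + 1"
  have "L' > 0" "L \<le> L'" unfolding L'_def by auto
  obtain d where "d > 0" and d: "\<And>p. norm (p - p0) < d \<Longrightarrow>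
      norm (\<Phi> p - \<Phi> p0 - \<Phi>' (p - p0)) \<le> e / L' * norm (p - p0)"
    using \<Phi> \<open>e > 0\<close> \<open>L' > 0\<close> unfolding has_derivative_at_alt by (meson divide_pos_pos)
  have "\<forall>\<^sub>F w in at w0. dist w w0 < d / L'"
    unfolding eventually_at using \<open>d > 0\<close> \<open>L' > 0\<close> by (intro exI[of _ "d / L'"]) auto
  with \<gamma> show ?thesis
  proof eventually_elim
    case (elim w)
    have \<gamma>w: "norm (\<gamma> w - p0) \<le> L' * norm (w - w0)"
      using elim \<open>L \<le> L'\<close> by (meson mult_right_mono norm_ge_zero order_trans)
    also have "\<dots> < d" using elim \<open>L' > 0\<close> by (simp add: dist_norm field_simps)
    finally have "norm (\<Phi> (\<gamma> w) - \<Phi> p0 - \<Phi>' (\<gamma> w - p0)) \<le> e / L' * norm (\<gamma> w - p0)"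
      by (rule d)
    also have "\<dots> \<le> e / L' * (L' * norm (w - w0))"
      using \<gamma>w \<open>e > 0\<close> \<open>L' > 0\<close> by (intro mult_left_mono) auto
    finally show ?case using \<open>L' > 0\<close> by simp
  qed
qed

lemma quotient_calm_expansion:
  fixes P B F :: "'w::real_normed_vector \<Rightarrow> real"
  assumes P: "(P has_derivative P') (at w0)" and B: "(B has_derivative B') (at w0)"
    and F: "\<forall>\<^sub>F w in at w0. \<bar>F w - F w0\<bar> \<le> \<kappa> * norm (w - w0)"
    and "B w0 - F w0 \<noteq> 0"
  defines "d \<equiv> B w0 - F w0"
  shows "\<forall>e>0. \<forall>\<^sub>F w in at w0. \<bar>P w / (B w - F w) - P w0 / d
           - ((P' (w - w0) * d - P w0 * B' (w - w0)) / d\<^sup>2 + P w0 / d\<^sup>2 * (F w - F w0))\<bar>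
         \<le> e * norm (w - w0)"
proof (intro allI impI)
  fix e :: real assume "e > 0"
  have "d \<noteq> 0" using \<open>B w0 - F w0 \<noteq> 0\<close> by (simp add: d_def)
  define \<Phi> where "\<Phi> p = P (fst p) / (B (fst p) - snd p)" for p :: "'w \<times> real"
  define \<Phi>' where "\<Phi>' q = (P' (fst q) * d - P w0 * B' (fst q)) / d\<^sup>2 + P w0 / d\<^sup>2 * snd q"
    for q :: "'w \<times> real"
  have der: "((\<lambda>p. P (fst p)) has_derivative (\<lambda>q. P' (fst q))) (at (w0, F w0))"
    "((\<lambda>p. B (fst p) - snd p) has_derivative (\<lambda>q. B' (fst q) - snd q)) (at (w0, F w0))"
    using has_derivative_compose[OF has_derivative_fst[OF has_derivative_ident]] P B
    by (auto intro!: has_derivative_diff has_derivative_snd[OF has_derivative_ident])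
  have "B (fst (w0, F w0)) - snd (w0, F w0) \<noteq> 0" using \<open>B w0 - F w0 \<noteq> 0\<close> by simp
  from has_derivative_divide[OF der this]
  have \<Phi>: "(\<Phi> has_derivative \<Phi>') (at (w0, F w0))"
    unfolding \<Phi>_def
    by (rule has_derivative_eq_rhs)
      (use \<open>d \<noteq> 0\<close> in \<open>simp add: fun_eq_iff \<Phi>'_def d_def[symmetric] field_simps power2_eq_square\<close>)
  have "\<forall>\<^sub>F w in at w0. norm ((w, F w) - (w0, F w0)) \<le> (1 + \<kappa>) * norm (w - w0)"
    using F
  proof eventually_elim
    case (elim w)
    have "norm ((w, F w) - (w0, F w0)) \<le> norm (w - w0) + \<bar>F w - F w0\<bar>"
      using norm_Pair_le[of "w - w0" "F w - F w0"] by simp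
    with elim show ?case by (simp add: distrib_right)
  qed
  from has_derivative_compose_calm_remainder[OF \<Phi> this \<open>e > 0\<close>]
  show "\<forall>\<^sub>F w in at w0. \<bar>P w / (B w - F w) - P w0 / d
           - ((P' (w - w0) * d - P w0 * B' (w - w0)) / d\<^sup>2 + P w0 / d\<^sup>2 * (F w - F w0))\<bar>
         \<le> e * norm (w - w0)"
    by (simp add: \<Phi>_def \<Phi>'_def d_def)
qed

section \<open>The function Gam near a point\<close>

locale Gam_point =
  fixes A :: "'a::euclidean_space \<Rightarrow> 'b::euclidean_space" and K :: "'a \<Rightarrow> 'c::euclidean_space"
    and f :: "'c \<Rightarrow> ereal" and g :: "'b \<Rightarrow> ereal" and h :: "'a \<Rightarrow> real" and S :: "'a set"
    and m \<delta> \<gamma> :: real and xh uh gh :: 'a and yh :: 'c and zh Dg :: 'b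
  assumes linear_A: "linear A" and linear_K: "linear K" and convex_S: "convex S"
    and proper_f: "proper_fun f" and proper_g: "proper_fun g" and m_pos: "m > 0"
    and h_deriv: "GDERIV h xh :> gh"
    and fconj_g_deriv: "GDERIV (\<lambda>z. real_of_ereal (fconj g z)) zh :> Dg"
    and yh_dom: "yh \<in> edom (fconj f)" and fconj_f_calm: "calm_at (fconj f) yh"
    and xh_S: "xh \<in> S" and gap_hat: "ereal (inner (K xh) yh) - fconj f yh > ereal (m / 2)"
    and zh_int: "zh \<in> interior (edom (fconj g))"
    and Psi_hat_pos: "Psi A g h S xh zh uh \<delta> \<gamma> > 0"
begin

definition fstar :: "'c \<Rightarrow> real" where "fstar y = real_of_ereal (fconj f y)"
definition gstar :: "'b \<Rightarrow> real" where "gstar z = real_of_ereal (fconj g z)"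

definition P :: "'a \<times> 'c \<times> 'b \<times> 'a \<Rightarrow> real" where
  "P = (\<lambda>(x, y, z, u). inner z (A x) - gstar z + h x + \<delta> / 2 * (norm (x - u))\<^sup>2 - \<gamma> / 2 * (norm z)\<^sup>2)"

definition R :: "'a \<times> 'c \<times> 'b \<times> 'a \<Rightarrow> real" where
  "R = (\<lambda>(x, y, z, u). P (x, y, z, u) / (inner (K x) y - fstar y))"

definition grad_P :: "'a \<times> 'c \<times> 'b \<times> 'a" where
  "grad_P = (adjoint A zh + gh + \<delta> *\<^sub>R (xh - uh), 0, A xh - Dg - \<gamma> *\<^sub>R zh, \<delta> *\<^sub>R (uh - xh))"

definition grad_B :: "'a \<times> 'c \<times> 'b \<times> 'a" where
  "grad_B = (adjoint K yh, K xh, 0, 0)"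

definition \<alpha>1 :: real where "\<alpha>1 = real_of_ereal (Psi A g h S xh zh uh \<delta> \<gamma>)"
definition \<alpha>2 :: real where "\<alpha>2 = inner (K xh) yh - fstar yh"

definition grad_R :: "'a \<times> 'c \<times> 'b \<times> 'a" where
  "grad_R = (1 / \<alpha>2) *\<^sub>R grad_P - (\<alpha>1 / \<alpha>2\<^sup>2) *\<^sub>R grad_B"

lemma fconj_f_near:
  obtains \<kappa> where "\<kappa> > 0"
    "\<forall>\<^sub>F y in nhds yh. fconj f y = ereal (fstar y) \<and> \<bar>fstar y - fstar yh\<bar> \<le> \<kappa> * norm (y - yh)"
proof -
  obtain \<epsilon> \<kappa> where "\<epsilon> > 0" "\<kappa> > 0" and calm: "\<And>y. norm (y - yh) < \<epsilon> \<Longrightarrow>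
      \<bar>fconj f y - fconj f yh\<bar> \<le> ereal (\<kappa> * norm (y - yh))"
    using fconj_f_calm unfolding calm_at_def by blast
  have yh: "fconj f yh = ereal (fstar yh)"
    using yh_dom fconj_neq_minf[OF proper_f, of yh] by (cases "fconj f yh") (auto simp: edom_def fstar_def)
  have "fconj f y = ereal (fstar y) \<and> \<bar>fstar y - fstar yh\<bar> \<le> \<kappa> * norm (y - yh)"
    if "dist y yh < \<epsilon>" for y
  proof -
    have "\<bar>fconj f y - ereal (fstar yh)\<bar> \<le> ereal (\<kappa> * norm (y - yh))"
      using calm[of y] that yh by (simp add: dist_norm)
    then show ?thesis
      using fconj_neq_minf[OF proper_f, of y] by (cases "fconj f y") (simp_all add: fstar_def)
  qed
  with \<open>\<epsilon> > 0\<close> \<open>\<kappa> > 0\<close> show ?thesis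
    by (intro that[of \<kappa>]) (auto simp: eventually_nhds_metric)
qed

lemma fconj_f_finite_near: "\<forall>\<^sub>F y in nhds yh. fconj f y = ereal (fstar y)"
proof -
  obtain \<kappa> where "\<forall>\<^sub>F y in nhds yh.
      fconj f y = ereal (fstar y) \<and> \<bar>fstar y - fstar yh\<bar> \<le> \<kappa> * norm (y - yh)"
    using fconj_f_near by blast
  then show ?thesis by (rule eventually_mono) simp
qed

lemma isCont_fstar: "isCont fstar yh"
proof -
  obtain \<kappa> where "\<forall>\<^sub>F y in nhds yh.
      fconj f y = ereal (fstar y) \<and> \<bar>fstar y - fstar yh\<bar> \<le> \<kappa> * norm (y - yh)"
    using fconj_f_near by blast
  then show ?thesis
    by (intro isCont_if_calm[of fstar yh \<kappa>]) (auto simp: eventually_nhds_conv_at elim: eventually_mono)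
qed

lemma fconj_g_finite_near: "\<forall>\<^sub>F z in nhds zh. fconj g z = ereal (gstar z)"
proof -
  have "\<forall>\<^sub>F z in nhds zh. z \<in> interior (edom (fconj g))"
    using zh_int by (intro eventually_nhds_in_open) auto
  then show ?thesis
  proof eventually_elim
    case (elim z)
    then have "fconj g z \<noteq> \<infinity>" using interior_subset by (fastforce simp: edom_def)
    then show ?case using fconj_neq_minf[OF proper_g, of z] by (cases "fconj g z") (auto simp: gstar_def)
  qed
qed

lemma \<alpha>2_gt: "\<alpha>2 > m / 2"
  using gap_hat eventually_nhds_x_imp_x[OF fconj_f_finite_near] by (simp add: \<alpha>2_def)

lemma Psi_eq_P:
  assumes "x \<in> S" "fconj g z = ereal (gstar z)"
  shows "Psi A g h S x z u \<delta> \<gamma> = ereal (P (x, y, z, u))"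
  using assms by (simp add: Psi_def P_def ind_def)

lemma \<alpha>1_eq: "\<alpha>1 = P (xh, yh, zh, uh)" and \<alpha>1_pos: "\<alpha>1 > 0"
  using Psi_eq_P[OF xh_S eventually_nhds_x_imp_x[OF fconj_g_finite_near], where u = uh and y = yh]
    Psi_hat_pos
  by (simp_all add: \<alpha>1_def)

lemma gap_near:
  "\<forall>\<^sub>F p in nhds (xh, yh). m / 2 < inner (K (fst p)) (snd p) - fstar (snd p) \<and>
     fconj f (snd p) = ereal (fstar (snd p))"
proof -
  have "bounded_linear K" using linear_K linear_conv_bounded_linear by blast
  have id: "((\<lambda>p. p) \<longlongrightarrow> (xh, yh)) (nhds (xh, yh))" by (rule filterlim_ident)
  have fst: "(fst \<longlongrightarrow> xh) (nhds (xh, yh))" and snd: "(snd \<longlongrightarrow> yh) (nhds (xh, yh))"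
    using tendsto_fst[OF id] tendsto_snd[OF id] by simp_all
  have "((\<lambda>p. inner (K (fst p)) (snd p) - fstar (snd p)) \<longlongrightarrow> \<alpha>2) (nhds (xh, yh))"
    unfolding \<alpha>2_def
    by (intro tendsto_intros bounded_linear.tendsto[OF \<open>bounded_linear K\<close> fst] snd
        isCont_tendsto_compose[OF isCont_fstar snd])
  from order_tendstoD(1)[OF this \<alpha>2_gt] eventually_compose_filterlim[OF fconj_f_finite_near snd]
  show ?thesis by (simp add: eventually_conj_iff)
qed

lemma open_neighbourhoods:
  "\<exists>O1 O2 O3. open O1 \<and> open O2 \<and> open O3 \<and> O2 \<subseteq> edom (fconj f) \<and> O3 \<subseteq> edom (fconj g) \<and>
     xh \<in> O1 \<and> yh \<in> O2 \<and> zh \<in> O3 \<and>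
     (\<forall>x\<in>O1. \<forall>y\<in>O2. ereal (inner (K x) y) - fconj f y > ereal (m / 2))"
proof -
  obtain P1 P2 where "\<forall>\<^sub>F x in nhds xh. P1 x" "\<forall>\<^sub>F y in nhds yh. P2 y"
    and P12: "\<And>x y. P1 x \<Longrightarrow> P2 y \<Longrightarrow>
      m / 2 < inner (K x) y - fstar y \<and> fconj f y = ereal (fstar y)"
    using gap_near unfolding nhds_prod eventually_prod_filter by auto
  then obtain O1 O2 where O12: "open O1" "xh \<in> O1" "\<forall>x\<in>O1. P1 x" "open O2" "yh \<in> O2" "\<forall>y\<in>O2. P2 y"
    unfolding eventually_nhds by blast
  have "O2 \<subseteq> edom (fconj f)" using P12 O12 by (auto simp: edom_def)
  moreover have "\<forall>x\<in>O1. \<forall>y\<in>O2. ereal (inner (K x) y) - fconj f y > ereal (m / 2)"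
    using P12 O12 by auto
  ultimately show ?thesis
    using O12 zh_int interior_subset[of "edom (fconj g)"]
    by (intro exI[of _ O1] exI[of _ O2] exI[of _ "interior (edom (fconj g))"]) auto
qed

lemma Gam_eq_near:
  "\<forall>\<^sub>F w in nhds (xh, yh, zh, uh).
     Gam A K f g h S m \<delta> \<gamma> w = (if w \<in> S \<times> UNIV then ereal (R w) else \<infinity>)"
proof -
  have id: "((\<lambda>w. w) \<longlongrightarrow> (xh, yh, zh, uh)) (nhds (xh, yh, zh, uh))" by (rule filterlim_ident)
  have "((\<lambda>w. (fst w, fst (snd w))) \<longlongrightarrow> (xh, yh)) (nhds (xh, yh, zh, uh))"
    "((\<lambda>w. fst (snd (snd w))) \<longlongrightarrow> zh) (nhds (xh, yh, zh, uh))"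
    using tendsto_Pair[OF tendsto_fst[OF id] tendsto_fst[OF tendsto_snd[OF id]]]
      tendsto_fst[OF tendsto_snd[OF tendsto_snd[OF id]]]
    by simp_all
  from eventually_compose_filterlim[OF gap_near this(1)] eventually_compose_filterlim[OF fconj_g_finite_near this(2)]
  show ?thesis
  proof eventually_elim
    case (elim w)
    obtain x y z u where w: "w = (x, y, z, u)" by (cases w)
    with elim have gap: "m / 2 < inner (K x) y - fstar y"
      and fin: "fconj f y = ereal (fstar y)" "fconj g z = ereal (gstar z)"
      by simp_all
    then have "y \<in> edom (fconj f) \<and> ereal (inner (K x) y) - fconj f y > ereal (m / 2) \<and> z \<in> edom (fconj g)"
      by (simp add: edom_def)
    moreover have "inner (K x) y - fstar y > 0" using gap m_pos by linarith
    ultimately show ?case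
      using fin Psi_eq_P[OF _ fin(2), of x u y] unfolding w
      by (cases "x \<in> S") (simp_all add: Gam_def R_def Psi_def ind_def)
  qed
qed

lemma P_has_derivative: "(P has_derivative inner grad_P) (at (xh, yh, zh, uh))"
proof -
  let ?w0 = "(xh, yh, zh, uh)"
  have "bounded_linear A" using linear_A linear_conv_bounded_linear by blast
  have "((\<lambda>w. fst (snd (snd w))) has_derivative (\<lambda>w. fst (snd (snd w)))) (at ?w0)"
    "(fst has_derivative fst) (at ?w0)"
    by (intro has_derivative_fst has_derivative_snd has_derivative_ident)+
  moreover have "(gstar has_derivative (\<lambda>v. inner v Dg)) (at (fst (snd (snd ?w0))))"
    "(h has_derivative (\<lambda>v. inner v gh)) (at (fst ?w0))"
    using fconj_g_deriv h_deriv by (simp_all add: gderiv_def gstar_def[abs_def])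
  ultimately have dG:
      "((\<lambda>w. gstar (fst (snd (snd w)))) has_derivative (\<lambda>d. inner (fst (snd (snd d))) Dg)) (at ?w0)"
    and dh: "((\<lambda>w. h (fst w)) has_derivative (\<lambda>d. inner (fst d) gh)) (at ?w0)"
    by (auto dest: has_derivative_compose)
  have adj: "inner zh (A v) = inner v (adjoint A zh)" for v
    by (simp add: adjoint_works[OF linear_A] inner_commute)
  show ?thesis
    unfolding P_def split_beta' power2_norm_eq_inner
    by (rule derivative_eq_intros dG dh bounded_linear.has_derivative[OF \<open>bounded_linear A\<close>] | simp)+
      (simp add: fun_eq_iff grad_P_def adj inner_diff_left inner_diff_right inner_add_left inner_add_right
        inner_commute field_simps)
qed

lemma B_has_derivative:
  "((\<lambda>w. inner (K (fst w)) (fst (snd w))) has_derivative inner grad_B) (at (xh, yh, zh, uh))"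
proof -
  have "bounded_linear K" using linear_K linear_conv_bounded_linear by blast
  have adj: "inner yh (K v) = inner v (adjoint K yh)" for v
    by (simp add: adjoint_works[OF linear_K] inner_commute)
  show ?thesis
    by (rule derivative_eq_intros bounded_linear.has_derivative[OF \<open>bounded_linear K\<close>] | simp)+
      (simp add: fun_eq_iff grad_B_def adj inner_commute)
qed

lemma fstar_calm_at:
  obtains \<kappa> where "\<forall>\<^sub>F w in at (xh, yh, zh, uh).
    \<bar>fstar (fst (snd w)) - fstar yh\<bar> \<le> \<kappa> * norm (w - (xh, yh, zh, uh))"
proof -
  let ?w0 = "(xh, yh, zh, uh)"
  obtain \<kappa> where "\<kappa> > 0"
    and near: "\<forall>\<^sub>F y in nhds yh.
      fconj f y = ereal (fstar y) \<and> \<bar>fstar y - fstar yh\<bar> \<le> \<kappa> * norm (y - yh)"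
    using fconj_f_near by blast
  have "((\<lambda>w. fst (snd w)) \<longlongrightarrow> yh) (at ?w0)" by (auto intro!: tendsto_eq_intros)
  from eventually_compose_filterlim[OF near this]
  have "\<forall>\<^sub>F w in at ?w0. \<bar>fstar (fst (snd w)) - fstar yh\<bar> \<le> \<kappa> * norm (w - ?w0)"
  proof eventually_elim
    case (elim w)
    obtain x y z u where w: "w = (x, y, z, u)" by (cases w)
    have "norm (y - yh) \<le> norm (y - yh, z - zh, u - uh)" by (rule norm_fst_le)
    also have "\<dots> \<le> norm (x - xh, y - yh, z - zh, u - uh)" by (rule norm_snd_le)
    finally have "\<kappa> * norm (y - yh) \<le> \<kappa> * norm (w - ?w0)"
      using \<open>\<kappa> > 0\<close> w by (simp add: mult_left_mono)
    then show ?case using elim w by simp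
  qed
  then show ?thesis by (rule that)
qed

lemma R_expansion:
  "\<forall>e>0. \<forall>\<^sub>F w in at (xh, yh, zh, uh).
     \<bar>R w - R (xh, yh, zh, uh) - ((\<lambda>(x, y, z, u). \<alpha>1 / \<alpha>2\<^sup>2 * fstar y) w
        - (\<lambda>(x, y, z, u). \<alpha>1 / \<alpha>2\<^sup>2 * fstar y) (xh, yh, zh, uh))
        - inner grad_R (w - (xh, yh, zh, uh))\<bar>
     \<le> e * norm (w - (xh, yh, zh, uh))"
proof -
  let ?w0 = "(xh, yh, zh, uh)"
  obtain \<kappa> where calm: "\<forall>\<^sub>F w in at ?w0. \<bar>fstar (fst (snd w)) - fstar yh\<bar> \<le> \<kappa> * norm (w - ?w0)"
    using fstar_calm_at by blast
  have "\<alpha>2 \<noteq> 0" using \<alpha>2_gt m_pos by simp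
  then have "inner (K xh) yh \<noteq> fstar yh" by (simp add: \<alpha>2_def)
  note expansion = quotient_calm_expansion[OF P_has_derivative B_has_derivative,
      where F = "\<lambda>w. fstar (fst (snd w))", simplified, OF calm this]
  have grad_R_inner: "inner grad_R d = (inner grad_P d * \<alpha>2 - \<alpha>1 * inner grad_B d) / \<alpha>2\<^sup>2" for d
    using \<open>\<alpha>2 \<noteq> 0\<close> by (simp add: grad_R_def inner_diff_left field_simps power2_eq_square)
  have eq: "R w - R ?w0
      - ((\<lambda>(x, y, z, u). \<alpha>1 / \<alpha>2\<^sup>2 * fstar y) w - (\<lambda>(x, y, z, u). \<alpha>1 / \<alpha>2\<^sup>2 * fstar y) ?w0)
      - inner grad_R (w - ?w0)
    = P w / (inner (K (fst w)) (fst (snd w)) - fstar (fst (snd w))) - P ?w0 / (inner (K xh) yh - fstar yh)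
      - ((inner grad_P (w - ?w0) * (inner (K xh) yh - fstar yh) - P ?w0 * inner grad_B (w - ?w0))
           / (inner (K xh) yh - fstar yh)\<^sup>2
         + P ?w0 * (fstar (fst (snd w)) - fstar yh) / (inner (K xh) yh - fstar yh)\<^sup>2)" for w
    unfolding grad_R_inner \<alpha>1_eq R_def split_beta' \<alpha>2_def[symmetric]
    by (simp add: diff_divide_distrib algebra_simps \<alpha>2_def)
  show ?thesis unfolding eq by (rule expansion)
qed

lemma frechet_subdiff_Gam:
  "frechet_subdiff (Gam A K f g h S m \<delta> \<gamma>) (xh, yh, zh, uh) =
     {(\<xi>x, \<xi>y, \<xi>z, \<xi>u).
        (\<exists>w\<in>csubdiff (ind S) xh.
           \<xi>x = (1 / \<alpha>2\<^sup>2) *\<^sub>R (\<alpha>2 *\<^sub>R (adjoint A zh + gh + w + \<delta> *\<^sub>R (xh - uh)) - \<alpha>1 *\<^sub>R adjoint K yh)) \<and>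
        (\<exists>v\<in>csubdiff (fconj f) yh. \<xi>y = (\<alpha>1 / \<alpha>2\<^sup>2) *\<^sub>R (v - K xh)) \<and>
        \<xi>z = (1 / \<alpha>2) *\<^sub>R (A xh - Dg - \<gamma> *\<^sub>R zh) \<and>
        \<xi>u = (\<delta> / \<alpha>2) *\<^sub>R (uh - xh)}" (is "_ = ?rhs")
proof -
  let ?w0 = "(xh, yh, zh, uh)" and ?c = "\<alpha>1 / \<alpha>2\<^sup>2"
  have "\<alpha>2 > 0" using \<alpha>2_gt m_pos by simp
  then have "?c > 0" using \<alpha>1_pos by simp
  obtain lx ly lz lu where grad_R_eq: "grad_R = (lx, ly, lz, lu)" by (cases grad_R)
  have lx: "(1 / \<alpha>2\<^sup>2) *\<^sub>R (\<alpha>2 *\<^sub>R (adjoint A zh + gh + w + \<delta> *\<^sub>R (xh - uh)) - \<alpha>1 *\<^sub>R adjoint K yh)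
      = lx + (1 / \<alpha>2) *\<^sub>R w" for w
    using grad_R_eq \<open>\<alpha>2 > 0\<close>
    by (auto simp: grad_R_def grad_P_def grad_B_def algebra_simps power2_eq_square)
  have ly: "\<xi>y = ?c *\<^sub>R (v - K xh) \<longleftrightarrow> \<xi>y - ly = ?c *\<^sub>R v" for \<xi>y v
    using grad_R_eq by (auto simp: grad_R_def grad_P_def grad_B_def algebra_simps)
  have lz: "lz = (1 / \<alpha>2) *\<^sub>R (A xh - Dg - \<gamma> *\<^sub>R zh)" and lu: "lu = (\<delta> / \<alpha>2) *\<^sub>R (uh - xh)"
    using grad_R_eq by (simp_all add: grad_R_def grad_P_def grad_B_def)
  have char: "v \<in> frechet_subdiff (Gam A K f g h S m \<delta> \<gamma>) ?w0 \<longleftrightarrow>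
      frechet_subgradient_on (S \<times> UNIV) (\<lambda>(x, y, z, u). ?c * fstar y) ?w0 (v - grad_R)" for v
    using frechet_subdiff_eq_subgradient_on[OF Gam_eq_near] xh_S
      frechet_subgradient_on_shift[OF R_expansion, of "S \<times> UNIV" "v - grad_R"]
    by simp
  show ?thesis
  proof (intro set_eqI)
    fix v :: "'a \<times> 'c \<times> 'b \<times> 'a"
    obtain \<xi>x \<xi>y \<xi>z \<xi>u where v: "v = (\<xi>x, \<xi>y, \<xi>z, \<xi>u)" by (cases v)
    have "v \<in> frechet_subdiff (Gam A K f g h S m \<delta> \<gamma>) ?w0 \<longleftrightarrow>
        frechet_subgradient_on (S \<times> UNIV) (\<lambda>(x, y, z, u). ?c * fstar y) ?w0
          (\<xi>x - lx, \<xi>y - ly, \<xi>z - lz, \<xi>u - lu)"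
      using char[of v] by (simp add: v grad_R_eq)
    also have "\<dots> \<longleftrightarrow> \<xi>x - lx \<in> csubdiff (ind S) xh \<and> (\<exists>w\<in>csubdiff (fconj f) yh. \<xi>y - ly = ?c *\<^sub>R w)
        \<and> \<xi>z - lz = 0 \<and> \<xi>u - lu = 0"
      by (rule frechet_subgradient_on_ind_fconj_iff[OF convex_S xh_S \<open>?c > 0\<close> proper_f fconj_f_finite_near])
    also have "\<dots> \<longleftrightarrow> v \<in> ?rhs"
      using csubdiff_ind_translate_iff[OF xh_S, of "1 / \<alpha>2" \<xi>x lx] \<open>\<alpha>2 > 0\<close>
      by (simp add: v lx ly lz lu)
    finally show "v \<in> frechet_subdiff (Gam A K f g h S m \<delta> \<gamma>) ?w0 \<longleftrightarrow> v \<in> ?rhs" .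
  qed
qed

end

theorem lemma6p1:
  fixes S :: "'a::euclidean_space set"
    and A :: "'a \<Rightarrow> 'b::euclidean_space"
    and K :: "'a \<Rightarrow> 'c::euclidean_space"
    and g :: "'b \<Rightarrow> ereal" and f :: "'c \<Rightarrow> ereal"
    and h :: "'a \<Rightarrow> real" and gradh :: "'a \<Rightarrow> 'a" and U :: "'a set"
    and m \<delta> \<gamma> :: real
    and xh uh :: 'a and yh :: 'c and zh :: 'b and Dg :: 'b
  assumes S: "S \<noteq> {}" "convex S" "compact S"
    and lin: "linear A" "linear K"
    and g: "proper_fun g" "convex_fun g" "lsc_fun g"
    and h: "open U" "S \<subseteq> U" "\<forall>x\<in>U. GDERIV h x :> gradh x"
           "\<exists>L. \<forall>x\<in>U. \<forall>x'\<in>U. norm (gradh x - gradh x') \<le> L * norm (x - x')"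
    and f: "proper_fun f" "convex_fun f" "lsc_fun f"
           "K ` S \<subseteq> interior (edom f)" "\<forall>x\<in>S. f (K x) > 0"
    and feas: "S \<inter> A -` edom g \<noteq> {}"
    and infpos: "(INF x\<in>S. g (A x) + ereal (h x)) > 0"
    and par: "m > 0" "\<delta> > 0" "\<gamma> > 0"
    and calm: "yh \<in> edom (fconj f)" "calm_at (fconj f) yh"
    and xh: "xh \<in> S" "ereal (inner (K xh) yh) - fconj f yh > ereal (m / 2)"
    and zh: "zh \<in> interior (edom (fconj g))"
            "GDERIV (\<lambda>z. real_of_ereal (fconj g z)) zh :> Dg"
    and alpha1: "Psi A g h S xh zh uh \<delta> \<gamma> > 0"
  shows "let \<alpha>1 = real_of_ereal (Psi A g h S xh zh uh \<delta> \<gamma>);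
             \<alpha>2 = inner (K xh) yh - real_of_ereal (fconj f yh)
         in \<exists>O1 O2 O3. open O1 \<and> open O2 \<and> open O3 \<and>
              O2 \<subseteq> edom (fconj f) \<and> O3 \<subseteq> edom (fconj g) \<and>
              xh \<in> O1 \<and> yh \<in> O2 \<and> zh \<in> O3 \<and>
              (\<forall>x\<in>O1. \<forall>y\<in>O2. ereal (inner (K x) y) - fconj f y > ereal (m / 2)) \<and>
              frechet_subdiff (Gam A K f g h S m \<delta> \<gamma>) (xh, yh, zh, uh) =
                {(\<xi>x, \<xi>y, \<xi>z, \<xi>u).
                   (\<exists>w\<in>csubdiff (ind S) xh.
                      \<xi>x = (1 / \<alpha>2\<^sup>2) *\<^sub>R (\<alpha>2 *\<^sub>R (adjoint A zh + gradh xh + w + \<delta> *\<^sub>R (xh - uh))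
                                          - \<alpha>1 *\<^sub>R adjoint K yh)) \<and>
                   (\<exists>v\<in>csubdiff (fconj f) yh. \<xi>y = (\<alpha>1 / \<alpha>2\<^sup>2) *\<^sub>R (v - K xh)) \<and>
                   \<xi>z = (1 / \<alpha>2) *\<^sub>R (A xh - Dg - \<gamma> *\<^sub>R zh) \<and>
                   \<xi>u = (\<delta> / \<alpha>2) *\<^sub>R (uh - xh)}"
proof -
  \<comment> \<open>Besides the data at the point, only convexity of S, properness of f and g and m > 0
     are used.\<close>
  interpret Gam_point A K f g h S m \<delta> \<gamma> xh uh "gradh xh" yh zh Dg
    by (rule Gam_point.intro) (use lin S(2) f(1) g(1) par(1) h(2,3) xh zh calm alpha1 in auto)
  show ?thesis
    using open_neighbourhoods frechet_subdiff_Gam unfolding Let_def \<alpha>1_def \<alpha>2_def fstar_def by blast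
qed

end
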